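(* Let $p$ (true dynamics) and $\hat p$ (learned model) be dynamics kernels, $\pi_D$ and $\pi$ policies, and $k\ge 0$ an integer. Suppose $$\sup_{t\ge 0}\ \mathbb E_{s\sim d_t^{\pi_D},\,a\sim \pi_D(\cdot\mid s)}\Big[D_{TV}\big(p(\cdot\mid s,a),\hat p(\cdot\mid s,a)\big)\Big]\le \epsilon_m \qquad\text{and}\qquad \sup_{s\in\mathcal S} D_{TV}\big(\pi_D(\cdot\mid s),\pi(\cdot\mid s)\big)\le\epsilon_\pi .$$ Let $\eta[\pi]=\eta(\pi,p)$ and $\eta^{\mathrm{branch}}[\pi]=\eta_k(\pi_D,p;\pi,\hat p)$. Then $$\eta[\pi]\ \ge\ \eta^{\mathrm{branch}}[\pi]-2r_{\max}\left[\frac{\gamma^{k+1}\epsilon_\pi}{(1-\gamma)^2}+\frac{(\gamma^k+2)\,\epsilon_\pi}{1-\gamma}+\frac{k}{1-\gamma}(\epsilon_m+2\epsilon_\pi)\right].$$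
   Context: Let $\mathcal S$ and $\mathcal A$ be countable (e.g. finite) state and action spaces, $\rho_0$ a probability distribution on $\mathcal S$ (initial state distribution), $\gamma\in(0,1)$ a discount factor, and $r:\mathcal S\times\mathcal A\to\mathbb R$ a reward function with $|r(s,a)|\le r_{\max}$ for all $(s,a)$. A policy is a Markov kernel $\pi(a\mid s)$ from $\mathcal S$ to $\mathcal A$; a dynamics kernel is a Markov kernel $q(s'\mid s,a)$ from $\mathcal S\times\mathcal A$ to $\mathcal S$. For a policy $\pi$ and dynamics $q$, the return is $\eta(\pi,q)=\sum_{t\ge0}\gamma^t\,\mathbb E[r(s_t,a_t)]$, where $s_0\sim\rho_0$, $a_t\sim\pi(\cdot\mid s_t)$, $s_{t+1}\sim q(\cdot\mid s_t,a_t)$. For probability distributions $\mu,\nu$ on a countable set, $D_{TV}(\mu,\nu)=\frac12\sum_x|\mu(x)-\nu(x)|$. Here $d_t^{\pi_D}$ denotes the distribution of $s_t$ when $s_0\sim\rho_0$, $a_i\sim\pi_D(\cdot\mid s_i)$, $s_{i+1}\sim p(\cdot\mid s_i,a_i)$. Branched return: given a "pre-branch" pair (policy $\pi^{\mathrm{pre}}$, dynamics $q^{\mathrm{pre}}$), a "post-branch" pair (policy $\pi^{\mathrm{post}}$, dynamics $q^{\mathrm{post}}$) and an integer $k\ge0$, for each $t\ge0$ let $m_t=\max(t-k,0)$ and generate $s_0\sim\rho_0$; for $0\le i<m_t$: $a_i\sim\pi^{\mathrm{pre}}(\cdot\mid s_i)$, $s_{i+1}\sim q^{\mathrm{pre}}(\cdot\mid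 s_i,a_i)$; for $m_t\le i<t$: $a_i\sim\pi^{\mathrm{post}}(\cdot\mid s_i)$, $s_{i+1}\sim q^{\mathrm{post}}(\cdot\mid s_i,a_i)$; finally $a_t\sim\pi^{\mathrm{post}}(\cdot\mid s_t)$. Let $d_t$ be the law of $(s_t,a_t)$ so produced. The $k$-branched return is $\eta_k(\pi^{\mathrm{pre}},q^{\mathrm{pre}};\pi^{\mathrm{post}},q^{\mathrm{post}})=\sum_{t\ge0}\gamma^t\,\mathbb E_{(s,a)\sim d_t}[r(s,a)]$. (Thus the state at time $t$ is obtained by following the pre-branch pair up to time $t-k$ and then the post-branch pair for the remaining at most $k$ steps; note $\eta_k(\pi,q;\pi,q)=\eta(\pi,q)$.) *)

theory Defs
  imports "HOL-Probability.Probability"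
begin

definition tv_dist :: "'x pmf \<Rightarrow> 'x pmf \<Rightarrow> real" where
  "tv_dist \<mu> \<nu> = (1/2) * infsum (\<lambda>x. \<bar>pmf \<mu> x - pmf \<nu> x\<bar>) UNIV"

definition step_dist :: "('s \<Rightarrow> 'a pmf) \<Rightarrow> ('s \<Rightarrow> 'a \<Rightarrow> 's pmf) \<Rightarrow> 's pmf \<Rightarrow> 's pmf" where
  "step_dist \<pi> q \<mu> = bind_pmf \<mu> (\<lambda>s. bind_pmf (\<pi> s) (\<lambda>a. q s a))"

definition state_dist :: "'s pmf \<Rightarrow> ('s \<Rightarrow> 'a pmf) \<Rightarrow> ('s \<Rightarrow> 'a \<Rightarrow> 's pmf) \<Rightarrow> nat \<Rightarrow> 's pmf" where
  "state_dist \<rho>0 \<pi> q t = (step_dist \<pi> q ^^ t) \<rho>0"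

definition sa_dist :: "('s \<Rightarrow> 'a pmf) \<Rightarrow> 's pmf \<Rightarrow> ('s \<times> 'a) pmf" where
  "sa_dist \<pi> \<mu> = bind_pmf \<mu> (\<lambda>s. map_pmf (\<lambda>a. (s, a)) (\<pi> s))"

definition ret :: "'s pmf \<Rightarrow> real \<Rightarrow> ('s \<Rightarrow> 'a \<Rightarrow> real) \<Rightarrow> ('s \<Rightarrow> 'a pmf) \<Rightarrow> ('s \<Rightarrow> 'a \<Rightarrow> 's pmf) \<Rightarrow> real" where
  "ret \<rho>0 \<gamma> r \<pi> q = (\<Sum>t. \<gamma> ^ t *
     measure_pmf.expectation (sa_dist \<pi> (state_dist \<rho>0 \<pi> q t)) (\<lambda>(s, a). r s a))"

text \<open>Branched state distribution at time t: follow (pre) for m_t = max(t-k,0) = t - k (nat)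
  steps, then (post) for the remaining t - m_t steps.\<close>
definition branch_state_dist ::
  "'s pmf \<Rightarrow> nat \<Rightarrow> ('s \<Rightarrow> 'a pmf) \<Rightarrow> ('s \<Rightarrow> 'a \<Rightarrow> 's pmf) \<Rightarrow> ('s \<Rightarrow> 'a pmf) \<Rightarrow> ('s \<Rightarrow> 'a \<Rightarrow> 's pmf) \<Rightarrow> nat \<Rightarrow> 's pmf" where
  "branch_state_dist \<rho>0 k \<pi>pre qpre \<pi>post qpost t =
     (let m = t - k in (step_dist \<pi>post qpost ^^ (t - m)) (state_dist \<rho>0 \<pi>pre qpre m))"

definition branched_ret ::
  "'s pmf \<Rightarrow> real \<Rightarrow> ('s \<Rightarrow> 'a \<Rightarrow> real) \<Rightarrow> nat \<Rightarrow> ('s \<Rightarrow> 'a pmf) \<Rightarrow> ('s \<Rightarrow> 'a \<Rightarrow> 's pmf) \<Rightarrow> ('s \<Rightarrow> 'a pmf) \<Rightarrow> ('s \<Rightarrow> 'a \<Rightarrow> 's pmf) \<Rightarrow> real" where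
  "branched_ret \<rho>0 \<gamma> r k \<pi>pre qpre \<pi>post qpost = (\<Sum>t. \<gamma> ^ t *
     measure_pmf.expectation (sa_dist \<pi>post (branch_state_dist \<rho>0 k \<pi>pre qpre \<pi>post qpost t))
       (\<lambda>(s, a). r s a))"

end

theory Submission
  imports Defs
begin

text \<open>
  Total variation distance is nonexpansive under Markov kernels, so the one-step errors of
  two chains add up.  Replacing \<open>\<pi>D\<close> by \<open>\<pi>\<close> costs \<open>\<epsilon>\<pi>\<close> per step, hence the true state
  distribution of \<open>\<pi>\<close> at time \<open>t\<close> is within \<open>t \<epsilon>\<pi>\<close> of the data distribution.  The branched
  rollout agrees with the data rollout up to time \<open>t - k\<close>, and each of its remaining
  \<open>min t k\<close> steps changes the policy (cost \<open>\<epsilon>\<pi>\<close>) and the dynamics (cost \<open>\<epsilon>m\<close>: the model error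
  is averaged over exactly the data distribution of that time).  Since a reward bounded by
  \<open>rmax\<close> has expectations differing by at most \<open>2 rmax\<close> times the distance, summing the
  discounted bounds gives \<open>2 rmax (\<gamma>^(k+1) \<epsilon>\<pi> / (1-\<gamma>)^2 + k (\<epsilon>m + 2 \<epsilon>\<pi>) / (1-\<gamma>))\<close>.
\<close>

text \<open>\<open>2 * tv_dist\<close> as an \<open>ennreal\<close> integral, the form in which Tonelli's theorem applies.\<close>

definition l1_dist_pmf :: "'x pmf \<Rightarrow> 'x pmf \<Rightarrow> ennreal" where
  "l1_dist_pmf \<mu> \<nu> = (\<integral>\<^sup>+ x. ennreal \<bar>pmf \<mu> x - pmf \<nu> x\<bar> \<partial>count_space UNIV)"

lemma l1_dist_pmf_le_2: "l1_dist_pmf \<mu> \<nu> \<le> 2"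
proof -
  have "l1_dist_pmf \<mu> \<nu> \<le> (\<integral>\<^sup>+ x. ennreal (pmf \<mu> x) + ennreal (pmf \<nu> x) \<partial>count_space UNIV)"
    unfolding l1_dist_pmf_def
    by (intro nn_integral_mono) (smt (verit) ennreal_leI ennreal_plus pmf_nonneg)
  also have "\<dots> = 2"
    by (subst nn_integral_add) (auto simp: nn_integral_pmf measure_pmf.emeasure_space_1[simplified] one_add_one)
  finally show ?thesis .
qed

lemma l1_dist_pmf_less_top: "l1_dist_pmf \<mu> \<nu> < \<top>"
  using l1_dist_pmf_le_2[of \<mu> \<nu>] by (simp add: order_le_less_trans)

lemma l1_dist_pmf_commute: "l1_dist_pmf \<mu> \<nu> = l1_dist_pmf \<nu> \<mu>"
  unfolding l1_dist_pmf_def by (simp add: abs_minus_commute)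

lemma l1_dist_pmf_triangle: "l1_dist_pmf \<mu> \<rho> \<le> l1_dist_pmf \<mu> \<nu> + l1_dist_pmf \<nu> \<rho>"
  unfolding l1_dist_pmf_def
  by (subst nn_integral_add[symmetric])
     (auto intro!: nn_integral_mono simp: ennreal_plus[symmetric] simp del: ennreal_plus)

lemma integrable_abs_pmf_diff: "integrable (count_space UNIV) (\<lambda>x. \<bar>pmf \<mu> x - pmf \<nu> x\<bar>)"
  using l1_dist_pmf_less_top[of \<mu> \<nu>] unfolding l1_dist_pmf_def by (intro integrableI_nonneg) auto

lemma nn_integral_swap_count_space:
  "(\<integral>\<^sup>+y. \<integral>\<^sup>+x. g x y \<partial>count_space UNIV \<partial>count_space UNIV)
     = (\<integral>\<^sup>+x. \<integral>\<^sup>+y. g x y \<partial>count_space UNIV \<partial>count_space UNIV)"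
  using nn_integral_snd_count_space[of "case_prod g"] nn_integral_fst_count_space[of "case_prod g"]
  by simp

lemma tv_dist_eq_l1_dist_pmf: "tv_dist \<mu> \<nu> = enn2real (l1_dist_pmf \<mu> \<nu>) / 2"
proof -
  let ?f = "\<lambda>x. \<bar>pmf \<mu> x - pmf \<nu> x\<bar>"
  have "Infinite_Set_Sum.abs_summable_on ?f UNIV"
    using integrable_abs_pmf_diff[of \<mu> \<nu>] by (simp add: Infinite_Set_Sum.abs_summable_on_def)
  then have "infsum ?f UNIV = infsetsum ?f UNIV"
    by (rule infsetsum_infsum[symmetric])
  also have "\<dots> = enn2real (l1_dist_pmf \<mu> \<nu>)"
    using l1_dist_pmf_less_top[of \<mu> \<nu>] unfolding l1_dist_pmf_def
    by (subst infsetsum_conv_nn_integral) auto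
  finally show ?thesis unfolding tv_dist_def by simp
qed

lemma l1_dist_pmf_eq_tv_dist: "l1_dist_pmf \<mu> \<nu> = ennreal (2 * tv_dist \<mu> \<nu>)"
  using l1_dist_pmf_less_top[of \<mu> \<nu>] by (simp add: tv_dist_eq_l1_dist_pmf)

lemma tv_dist_nonneg: "0 \<le> tv_dist \<mu> \<nu>"
  by (simp add: tv_dist_eq_l1_dist_pmf)

lemma tv_dist_le_1: "tv_dist \<mu> \<nu> \<le> 1"
proof -
  have "ennreal (2 * tv_dist \<mu> \<nu>) \<le> ennreal 2"
    using l1_dist_pmf_le_2[of \<mu> \<nu>] by (simp add: l1_dist_pmf_eq_tv_dist)
  then show ?thesis by (subst (asm) ennreal_le_iff) auto
qed

lemma tv_dist_commute: "tv_dist \<mu> \<nu> = tv_dist \<nu> \<mu>"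
  by (simp add: tv_dist_eq_l1_dist_pmf l1_dist_pmf_commute)

lemma tv_dist_triangle: "tv_dist \<mu> \<rho> \<le> tv_dist \<mu> \<nu> + tv_dist \<nu> \<rho>"
proof -
  have "ennreal (2 * tv_dist \<mu> \<rho>) \<le> ennreal (2 * tv_dist \<mu> \<nu> + 2 * tv_dist \<nu> \<rho>)"
    using l1_dist_pmf_triangle[of \<mu> \<rho> \<nu>]
    by (simp add: l1_dist_pmf_eq_tv_dist ennreal_plus tv_dist_nonneg)
  then show ?thesis by (subst (asm) ennreal_le_iff) (auto simp: tv_dist_nonneg)
qed

lemma expectation_eq_integral_count_space:
  "measure_pmf.expectation \<mu> f = (\<integral>x. pmf \<mu> x * f x \<partial>count_space UNIV)"
  by (simp add: measure_pmf_eq_density integral_density)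

lemma integrable_pmf_mult_bounded:
  assumes "\<And>x. \<bar>f x\<bar> \<le> B"
  shows "integrable (count_space UNIV) (\<lambda>x. pmf \<mu> x * f x)"
proof (rule Bochner_Integration.integrable_bound)
  show "integrable (count_space UNIV) (\<lambda>x. pmf \<mu> x * B)"
    using integrable_pmf[of UNIV \<mu>] by simp
  show "AE x in count_space UNIV. norm (pmf \<mu> x * f x) \<le> norm (pmf \<mu> x * B)"
    using assms by (auto simp: abs_mult intro!: mult_left_mono order.trans[OF _ abs_ge_self])
qed auto

lemma l1_dist_pmf_bind_pmf_le: "l1_dist_pmf (bind_pmf \<mu> K) (bind_pmf \<nu> K) \<le> l1_dist_pmf \<mu> \<nu>"
proof -
  have pointwise: "ennreal \<bar>pmf (bind_pmf \<mu> K) y - pmf (bind_pmf \<nu> K) y\<bar>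
      \<le> (\<integral>\<^sup>+x. ennreal (\<bar>pmf \<mu> x - pmf \<nu> x\<bar> * pmf (K x) y) \<partial>count_space UNIV)"
    (is "_ \<le> ?I") for y
  proof -
    have i\<mu>: "integrable (count_space UNIV) (\<lambda>x. pmf \<mu> x * pmf (K x) y)"
      and i\<nu>: "integrable (count_space UNIV) (\<lambda>x. pmf \<nu> x * pmf (K x) y)"
      by (auto intro!: integrable_pmf_mult_bounded[where B=1] simp: pmf_le_1)
    have "integrable (count_space UNIV) (\<lambda>x. (pmf \<mu> x - pmf \<nu> x) * pmf (K x) y)"
      using Bochner_Integration.integrable_diff[OF i\<mu> i\<nu>] by (simp add: left_diff_distrib)
    then have i: "integrable (count_space UNIV) (\<lambda>x. \<bar>pmf \<mu> x - pmf \<nu> x\<bar> * pmf (K x) y)"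
      by (auto dest: integrable_abs simp: abs_mult)
    have "\<bar>pmf (bind_pmf \<mu> K) y - pmf (bind_pmf \<nu> K) y\<bar>
        = \<bar>\<integral>x. (pmf \<mu> x - pmf \<nu> x) * pmf (K x) y \<partial>count_space UNIV\<bar>"
      unfolding pmf_bind expectation_eq_integral_count_space
      by (simp add: Bochner_Integration.integral_diff[OF i\<mu> i\<nu>, symmetric] left_diff_distrib)
    also have "\<dots> \<le> (\<integral>x. \<bar>pmf \<mu> x - pmf \<nu> x\<bar> * pmf (K x) y \<partial>count_space UNIV)"
      using integral_abs_bound[of _ "\<lambda>x. (pmf \<mu> x - pmf \<nu> x) * pmf (K x) y"]
      by (simp add: abs_mult)
    finally have "ennreal \<bar>pmf (bind_pmf \<mu> K) y - pmf (bind_pmf \<nu> K) y\<bar>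
        \<le> ennreal (\<integral>x. \<bar>pmf \<mu> x - pmf \<nu> x\<bar> * pmf (K x) y \<partial>count_space UNIV)"
      by (rule ennreal_leI)
    also have "\<dots> = ?I"
      using i by (subst nn_integral_eq_integral) auto
    finally show ?thesis .
  qed
  have "l1_dist_pmf (bind_pmf \<mu> K) (bind_pmf \<nu> K)
      \<le> (\<integral>\<^sup>+y. \<integral>\<^sup>+x. ennreal (\<bar>pmf \<mu> x - pmf \<nu> x\<bar> * pmf (K x) y) \<partial>count_space UNIV \<partial>count_space UNIV)"
    unfolding l1_dist_pmf_def by (intro nn_integral_mono pointwise)
  also have "\<dots> = l1_dist_pmf \<mu> \<nu>"
    unfolding l1_dist_pmf_def
    by (subst nn_integral_swap_count_space)
       (simp add: ennreal_mult nn_integral_cmult nn_integral_pmf measure_pmf.emeasure_space_1[simplified])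
  finally show ?thesis .
qed

lemma l1_dist_pmf_bind_pmf_kernels_le:
  "l1_dist_pmf (bind_pmf \<mu> K) (bind_pmf \<mu> K') \<le> (\<integral>\<^sup>+x. l1_dist_pmf (K x) (K' x) \<partial>measure_pmf \<mu>)"
proof -
  have pointwise: "ennreal \<bar>pmf (bind_pmf \<mu> K) y - pmf (bind_pmf \<mu> K') y\<bar>
      \<le> (\<integral>\<^sup>+x. ennreal \<bar>pmf (K x) y - pmf (K' x) y\<bar> \<partial>measure_pmf \<mu>)" for y
  proof -
    have iK: "integrable (measure_pmf \<mu>) (\<lambda>x. pmf (K x) y)"
      and iK': "integrable (measure_pmf \<mu>) (\<lambda>x. pmf (K' x) y)"
      by (auto intro!: measure_pmf.integrable_const_bound[where B=1] simp: pmf_le_1)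
    have "\<bar>pmf (bind_pmf \<mu> K) y - pmf (bind_pmf \<mu> K') y\<bar>
        = \<bar>\<integral>x. pmf (K x) y - pmf (K' x) y \<partial>measure_pmf \<mu>\<bar>"
      unfolding pmf_bind by (simp add: Bochner_Integration.integral_diff[OF iK iK'])
    also have "\<dots> \<le> (\<integral>x. \<bar>pmf (K x) y - pmf (K' x) y\<bar> \<partial>measure_pmf \<mu>)"
      by (rule integral_abs_bound)
    finally have "ennreal \<bar>pmf (bind_pmf \<mu> K) y - pmf (bind_pmf \<mu> K') y\<bar>
        \<le> ennreal (\<integral>x. \<bar>pmf (K x) y - pmf (K' x) y\<bar> \<partial>measure_pmf \<mu>)"
      by (rule ennreal_leI)
    also have "\<dots> = (\<integral>\<^sup>+x. ennreal \<bar>pmf (K x) y - pmf (K' x) y\<bar> \<partial>measure_pmf \<mu>)"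
      using integrable_abs[OF Bochner_Integration.integrable_diff[OF iK iK']]
      by (subst nn_integral_eq_integral) auto
    finally show ?thesis .
  qed
  have "l1_dist_pmf (bind_pmf \<mu> K) (bind_pmf \<mu> K')
      \<le> (\<integral>\<^sup>+y. \<integral>\<^sup>+x. ennreal \<bar>pmf (K x) y - pmf (K' x) y\<bar> \<partial>measure_pmf \<mu> \<partial>count_space UNIV)"
    unfolding l1_dist_pmf_def by (intro nn_integral_mono pointwise)
  also have "\<dots> = (\<integral>\<^sup>+x. l1_dist_pmf (K x) (K' x) \<partial>measure_pmf \<mu>)"
    unfolding l1_dist_pmf_def nn_integral_measure_pmf
    by (subst nn_integral_swap_count_space) (simp add: nn_integral_cmult)
  finally show ?thesis .
qed

lemma tv_dist_bind_pmf_le: "tv_dist (bind_pmf \<mu> K) (bind_pmf \<nu> K) \<le> tv_dist \<mu> \<nu>"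
  using l1_dist_pmf_bind_pmf_le[of \<mu> K \<nu>]
  by (simp add: l1_dist_pmf_eq_tv_dist tv_dist_nonneg)

lemma tv_dist_map_pmf_le: "tv_dist (map_pmf f \<mu>) (map_pmf f \<nu>) \<le> tv_dist \<mu> \<nu>"
  unfolding map_pmf_def by (rule tv_dist_bind_pmf_le)

lemma tv_dist_bind_pmf_kernels_le:
  "tv_dist (bind_pmf \<mu> K) (bind_pmf \<mu> K') \<le> measure_pmf.expectation \<mu> (\<lambda>x. tv_dist (K x) (K' x))"
proof -
  have "integrable (measure_pmf \<mu>) (\<lambda>x. 2 * tv_dist (K x) (K' x))"
    by (rule measure_pmf.integrable_const_bound[where B=2]) (auto simp: tv_dist_nonneg tv_dist_le_1)
  then have "(\<integral>\<^sup>+x. l1_dist_pmf (K x) (K' x) \<partial>measure_pmf \<mu>)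
      = ennreal (2 * measure_pmf.expectation \<mu> (\<lambda>x. tv_dist (K x) (K' x)))"
    unfolding l1_dist_pmf_eq_tv_dist by (subst nn_integral_eq_integral) (auto simp: tv_dist_nonneg)
  then show ?thesis
    using l1_dist_pmf_bind_pmf_kernels_le[of \<mu> K K']
    by (simp add: l1_dist_pmf_eq_tv_dist ennreal_le_iff integral_nonneg_AE tv_dist_nonneg)
qed

lemma tv_dist_bind_pmf_kernels_le_const:
  assumes "\<And>x. tv_dist (K x) (K' x) \<le> c"
  shows "tv_dist (bind_pmf \<mu> K) (bind_pmf \<mu> K') \<le> c"
proof -
  have "integrable (measure_pmf \<mu>) (\<lambda>x. tv_dist (K x) (K' x))"
    by (rule measure_pmf.integrable_const_bound[where B=1]) (auto simp: tv_dist_nonneg tv_dist_le_1)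
  then have "measure_pmf.expectation \<mu> (\<lambda>x. tv_dist (K x) (K' x)) \<le> c"
    using assms by (intro measure_pmf.integral_le_const) auto
  then show ?thesis
    using tv_dist_bind_pmf_kernels_le order.trans by blast
qed

lemma expectation_diff_le_tv_dist:
  assumes "\<And>x. \<bar>f x\<bar> \<le> B"
  shows "\<bar>measure_pmf.expectation \<mu> f - measure_pmf.expectation \<nu> f\<bar> \<le> 2 * B * tv_dist \<mu> \<nu>"
proof -
  have i\<mu>: "integrable (count_space UNIV) (\<lambda>x. pmf \<mu> x * f x)"
    and i\<nu>: "integrable (count_space UNIV) (\<lambda>x. pmf \<nu> x * f x)"
    using assms by (auto intro: integrable_pmf_mult_bounded)
  have i: "integrable (count_space UNIV) (\<lambda>x. (pmf \<mu> x - pmf \<nu> x) * f x)"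
    using Bochner_Integration.integrable_diff[OF i\<mu> i\<nu>] by (simp add: left_diff_distrib)
  have "\<bar>measure_pmf.expectation \<mu> f - measure_pmf.expectation \<nu> f\<bar>
      = \<bar>\<integral>x. (pmf \<mu> x - pmf \<nu> x) * f x \<partial>count_space UNIV\<bar>"
    unfolding expectation_eq_integral_count_space
    by (simp add: Bochner_Integration.integral_diff[OF i\<mu> i\<nu>, symmetric] left_diff_distrib)
  also have "\<dots> \<le> (\<integral>x. \<bar>pmf \<mu> x - pmf \<nu> x\<bar> * B \<partial>count_space UNIV)"
    using integrable_abs_pmf_diff[of \<mu> \<nu>] integrable_abs[OF i] assms
    by (intro order.trans[OF integral_abs_bound] integral_mono) (auto simp: abs_mult intro!: mult_left_mono)
  also have "\<dots> = B * enn2real (l1_dist_pmf \<mu> \<nu>)"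
    unfolding l1_dist_pmf_def by (simp add: integral_eq_nn_integral)
  finally show ?thesis
    by (simp add: tv_dist_eq_l1_dist_pmf)
qed

lemma tv_dist_funpow_le:
  assumes nonexpansive: "\<And>\<mu> \<nu>. tv_dist (X \<mu>) (X \<nu>) \<le> tv_dist \<mu> \<nu>"
    and step: "\<And>j. j < n \<Longrightarrow> tv_dist (X ((Y ^^ j) \<mu>)) (Y ((Y ^^ j) \<mu>)) \<le> c"
  shows "tv_dist ((X ^^ n) \<mu>) ((Y ^^ n) \<mu>) \<le> real n * c"
  using step
proof (induction n)
  case 0
  then show ?case by (simp add: tv_dist_eq_l1_dist_pmf l1_dist_pmf_def)
next
  case (Suc n)
  have "tv_dist ((X ^^ Suc n) \<mu>) ((Y ^^ Suc n) \<mu>)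
      \<le> tv_dist (X ((X ^^ n) \<mu>)) (X ((Y ^^ n) \<mu>)) + tv_dist (X ((Y ^^ n) \<mu>)) (Y ((Y ^^ n) \<mu>))"
    by (simp add: tv_dist_triangle)
  also have "\<dots> \<le> real n * c + c"
    using nonexpansive[of "(X ^^ n) \<mu>" "(Y ^^ n) \<mu>"] Suc by force
  finally show ?case by (simp add: algebra_simps)
qed

lemma step_dist_eq_bind_sa_dist: "step_dist \<pi> q \<mu> = bind_pmf (sa_dist \<pi> \<mu>) (\<lambda>(s, a). q s a)"
  by (simp add: step_dist_def sa_dist_def map_pmf_def bind_assoc_pmf bind_return_pmf)

lemma tv_dist_step_dist_le: "tv_dist (step_dist \<pi> q \<mu>) (step_dist \<pi> q \<nu>) \<le> tv_dist \<mu> \<nu>"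
  unfolding step_dist_def by (rule tv_dist_bind_pmf_le)

lemma tv_dist_sa_dist_le: "tv_dist (sa_dist \<pi> \<mu>) (sa_dist \<pi> \<nu>) \<le> tv_dist \<mu> \<nu>"
  unfolding sa_dist_def by (rule tv_dist_bind_pmf_le)

lemma tv_dist_step_dist_policies_le:
  assumes "\<And>s. tv_dist (\<pi>1 s) (\<pi>2 s) \<le> \<epsilon>"
  shows "tv_dist (step_dist \<pi>1 q \<mu>) (step_dist \<pi>2 q \<mu>) \<le> \<epsilon>"
proof -
  have "tv_dist (step_dist \<pi>1 q \<mu>) (step_dist \<pi>2 q \<mu>) \<le> tv_dist (sa_dist \<pi>1 \<mu>) (sa_dist \<pi>2 \<mu>)"
    unfolding step_dist_eq_bind_sa_dist by (rule tv_dist_bind_pmf_le)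
  also have "\<dots> \<le> \<epsilon>"
    unfolding sa_dist_def
    by (rule tv_dist_bind_pmf_kernels_le_const) (rule order.trans[OF tv_dist_map_pmf_le assms])
  finally show ?thesis .
qed

lemma tv_dist_step_dist_dynamics_le:
  "tv_dist (step_dist \<pi> q \<mu>) (step_dist \<pi> q' \<mu>)
     \<le> measure_pmf.expectation (sa_dist \<pi> \<mu>) (\<lambda>(s, a). tv_dist (q s a) (q' s a))"
  unfolding step_dist_eq_bind_sa_dist
  using tv_dist_bind_pmf_kernels_le[of "sa_dist \<pi> \<mu>" "\<lambda>(s, a). q s a" "\<lambda>(s, a). q' s a"]
  by (simp add: case_prod_unfold)

lemma tv_dist_state_dist_policies_le:
  assumes "\<And>s. tv_dist (\<pi>1 s) (\<pi>2 s) \<le> \<epsilon>"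
  shows "tv_dist (state_dist \<rho>0 \<pi>1 q t) (state_dist \<rho>0 \<pi>2 q t) \<le> real t * \<epsilon>"
  unfolding state_dist_def
  by (rule tv_dist_funpow_le[OF tv_dist_step_dist_le tv_dist_step_dist_policies_le[OF assms]])

lemma tv_dist_branch_state_dist_state_dist_le:
  assumes model: "\<forall>t. measure_pmf.expectation (sa_dist \<pi>D (state_dist \<rho>0 \<pi>D p t))
               (\<lambda>(s, a). tv_dist (p s a) (phat s a)) \<le> \<epsilon>m"
    and policy: "\<forall>s. tv_dist (\<pi>D s) (\<pi> s) \<le> \<epsilon>\<pi>"
  shows "tv_dist (branch_state_dist \<rho>0 k \<pi>D p \<pi> phat t) (state_dist \<rho>0 \<pi>D p t)
           \<le> real (min t k) * (\<epsilon>m + \<epsilon>\<pi>)"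
proof -
  define m where "m = t - k"
  have t: "t = min t k + m" and branch_steps: "t - m = min t k"
    unfolding m_def by auto
  have "tv_dist (step_dist \<pi> phat \<mu>) (step_dist \<pi>D p \<mu>) \<le> \<epsilon>m + \<epsilon>\<pi>"
    if "\<mu> = state_dist \<rho>0 \<pi>D p j" for \<mu> j
  proof -
    have "tv_dist (step_dist \<pi> phat \<mu>) (step_dist \<pi>D phat \<mu>) \<le> \<epsilon>\<pi>"
      using policy by (intro tv_dist_step_dist_policies_le) (simp add: tv_dist_commute)
    moreover have "tv_dist (step_dist \<pi>D phat \<mu>) (step_dist \<pi>D p \<mu>) \<le> \<epsilon>m"
      using order.trans[OF tv_dist_step_dist_dynamics_le model[rule_format]] that
      by (simp add: tv_dist_commute)
    ultimately show ?thesis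
      using tv_dist_triangle[of "step_dist \<pi> phat \<mu>" "step_dist \<pi>D p \<mu>" "step_dist \<pi>D phat \<mu>"]
      by linarith
  qed
  then have "tv_dist ((step_dist \<pi> phat ^^ min t k) (state_dist \<rho>0 \<pi>D p m))
                     ((step_dist \<pi>D p ^^ min t k) (state_dist \<rho>0 \<pi>D p m))
               \<le> real (min t k) * (\<epsilon>m + \<epsilon>\<pi>)"
    by (intro tv_dist_funpow_le tv_dist_step_dist_le)
       (simp add: state_dist_def flip: funpow_add comp_apply[of "_ ^^ _" "_ ^^ _"])
  moreover have "(step_dist \<pi>D p ^^ min t k) (state_dist \<rho>0 \<pi>D p m) = state_dist \<rho>0 \<pi>D p t"
    by (subst (2) t) (simp add: state_dist_def funpow_add)
  ultimately show ?thesis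
    by (simp add: branch_state_dist_def Let_def branch_steps flip: m_def)
qed

lemma tv_dist_state_dist_branch_state_dist_le:
  assumes model: "\<forall>t. measure_pmf.expectation (sa_dist \<pi>D (state_dist \<rho>0 \<pi>D p t))
               (\<lambda>(s, a). tv_dist (p s a) (phat s a)) \<le> \<epsilon>m"
    and policy: "\<forall>s. tv_dist (\<pi>D s) (\<pi> s) \<le> \<epsilon>\<pi>"
  shows "tv_dist (state_dist \<rho>0 \<pi> p t) (branch_state_dist \<rho>0 k \<pi>D p \<pi> phat t)
           \<le> real (t - k) * \<epsilon>\<pi> + real k * (\<epsilon>m + 2 * \<epsilon>\<pi>)"
proof -
  have "0 \<le> \<epsilon>\<pi>"
    using policy tv_dist_nonneg order.trans by blast
  moreover have "0 \<le> \<epsilon>m"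
    using model[rule_format, of 0]
    by (smt (verit) integral_nonneg_AE case_prod_unfold tv_dist_nonneg AE_I2)
  moreover have "tv_dist (state_dist \<rho>0 \<pi> p t) (state_dist \<rho>0 \<pi>D p t) \<le> real t * \<epsilon>\<pi>"
    using policy by (intro tv_dist_state_dist_policies_le) (simp add: tv_dist_commute)
  moreover have "tv_dist (state_dist \<rho>0 \<pi>D p t) (branch_state_dist \<rho>0 k \<pi>D p \<pi> phat t)
      \<le> real (min t k) * (\<epsilon>m + \<epsilon>\<pi>)"
    using tv_dist_branch_state_dist_state_dist_le[OF model policy] by (simp add: tv_dist_commute)
  moreover have "real (min t k) * (\<epsilon>m + 2 * \<epsilon>\<pi>) \<le> real k * (\<epsilon>m + 2 * \<epsilon>\<pi>)"
    using calculation by (intro mult_right_mono) auto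
  moreover have "real t = real (t - k) + real (min t k)"
    by simp
  ultimately show ?thesis
    using tv_dist_triangle[of "state_dist \<rho>0 \<pi> p t" _ "state_dist \<rho>0 \<pi>D p t"]
    by (smt (verit) distrib_left distrib_right)
qed

lemma sums_power_mult_diff:
  fixes \<gamma> :: real
  assumes "\<bar>\<gamma>\<bar> < 1"
  shows "(\<lambda>t. \<gamma> ^ t * real (t - k)) sums (\<gamma> ^ Suc k / (1 - \<gamma>)\<^sup>2)"
proof -
  have "(\<lambda>n. \<gamma> ^ Suc k * (of_nat (Suc n) * \<gamma> ^ n)) sums (\<gamma> ^ Suc k * (1 / (1 - \<gamma>)\<^sup>2))"
    using assms by (intro sums_mult geometric_deriv_sums) auto
  moreover have "(\<lambda>n. \<gamma> ^ Suc k * (of_nat (Suc n) * \<gamma> ^ n)) = (\<lambda>n. \<gamma> ^ (n + Suc k) * real (n + Suc k - k))"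
    by (auto simp: fun_eq_iff power_add mult_ac)
  moreover have "(\<Sum>t<Suc k. \<gamma> ^ t * real (t - k)) = 0"
    by (intro sum.neutral) auto
  ultimately show ?thesis
    using sums_iff_shift[of "\<lambda>t. \<gamma> ^ t * real (t - k)" "Suc k"] by simp
qed

lemma suminf_discounted_expectation_diff_le:
  fixes \<mu> \<nu> :: "nat \<Rightarrow> 'x pmf"
  assumes \<gamma>: "0 \<le> \<gamma>" "\<gamma> < 1"
    and f: "\<And>x. \<bar>f x\<bar> \<le> B"
    and tv: "\<And>t. tv_dist (\<mu> t) (\<nu> t) \<le> \<delta> t"
    and S: "(\<lambda>t. \<gamma> ^ t * \<delta> t) sums S"
  shows "(\<Sum>t. \<gamma> ^ t * measure_pmf.expectation (\<mu> t) f) - (\<Sum>t. \<gamma> ^ t * measure_pmf.expectation (\<nu> t) f)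
           \<le> 2 * B * S"
proof -
  have B: "0 \<le> B"
    using order.trans[OF abs_ge_zero f] .
  have summable: "summable (\<lambda>t. \<gamma> ^ t * measure_pmf.expectation (\<rho> t) f)" for \<rho> :: "nat \<Rightarrow> 'x pmf"
  proof (rule summable_comparison_test')
    show "summable (\<lambda>t. \<gamma> ^ t * B)"
      using \<gamma> by (intro summable_mult2 summable_geometric) auto
    show "norm (\<gamma> ^ t * measure_pmf.expectation (\<rho> t) f) \<le> \<gamma> ^ t * B" for t
    proof -
      have "\<bar>measure_pmf.expectation (\<rho> t) f\<bar> \<le> measure_pmf.expectation (\<rho> t) (\<lambda>_. B)"
        using f B
        by (intro order.trans[OF integral_abs_bound] integral_mono measure_pmf.integrable_const_bound[where B=B])
           auto
      then show ?thesis
        using \<gamma> by (simp add: abs_mult mult_left_mono)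
    qed
  qed
  have "\<gamma> ^ t * measure_pmf.expectation (\<mu> t) f - \<gamma> ^ t * measure_pmf.expectation (\<nu> t) f
          \<le> 2 * B * (\<gamma> ^ t * \<delta> t)" for t
  proof -
    have "measure_pmf.expectation (\<mu> t) f - measure_pmf.expectation (\<nu> t) f \<le> 2 * B * tv_dist (\<mu> t) (\<nu> t)"
      using expectation_diff_le_tv_dist[of f B "\<mu> t" "\<nu> t"] f abs_le_D1 by blast
    also have "\<dots> \<le> 2 * B * \<delta> t"
      using B tv by (intro mult_left_mono) auto
    finally show ?thesis
      using \<gamma> by (simp add: mult_left_mono mult.left_commute flip: right_diff_distrib)
  qed
  then have "(\<Sum>t. \<gamma> ^ t * measure_pmf.expectation (\<mu> t) f - \<gamma> ^ t * measure_pmf.expectation (\<nu> t) f)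
      \<le> (\<Sum>t. 2 * B * (\<gamma> ^ t * \<delta> t))"
    using S by (intro suminf_le summable_diff summable summable_mult sums_summable) auto
  also have "\<dots> = 2 * B * S"
    using sums_unique[OF sums_mult[OF S, of "2 * B"]] by simp
  finally show ?thesis
    using suminf_diff[OF summable summable] by simp
qed

theorem theorem2:
  fixes \<rho>0 :: "'s::countable pmf"
    and p phat :: "'s \<Rightarrow> 'a::countable \<Rightarrow> 's pmf"
    and \<pi>D \<pi> :: "'s \<Rightarrow> 'a pmf"
    and r :: "'s \<Rightarrow> 'a \<Rightarrow> real"
    and \<gamma> rmax \<epsilon>m \<epsilon>\<pi> :: real and k :: nat
  assumes "0 < \<gamma>" "\<gamma> < 1"
    and "\<forall>s a. \<bar>r s a\<bar> \<le> rmax"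
    and "\<forall>t. measure_pmf.expectation (sa_dist \<pi>D (state_dist \<rho>0 \<pi>D p t))
               (\<lambda>(s, a). tv_dist (p s a) (phat s a)) \<le> \<epsilon>m"
    and "\<forall>s. tv_dist (\<pi>D s) (\<pi> s) \<le> \<epsilon>\<pi>"
  shows "ret \<rho>0 \<gamma> r \<pi> p \<ge> branched_ret \<rho>0 \<gamma> r k \<pi>D p \<pi> phat
           - 2 * rmax * (\<gamma> ^ (k + 1) * \<epsilon>\<pi> / (1 - \<gamma>)^2 + (\<gamma> ^ k + 2) * \<epsilon>\<pi> / (1 - \<gamma>)
                         + real k / (1 - \<gamma>) * (\<epsilon>m + 2 * \<epsilon>\<pi>))"
proof -
  have rmax: "0 \<le> rmax"
    using assms(3) abs_ge_zero order.trans by blast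
  have \<epsilon>\<pi>: "0 \<le> \<epsilon>\<pi>"
    using assms(5) tv_dist_nonneg order.trans by blast
  define \<delta> where "\<delta> t = real (t - k) * \<epsilon>\<pi> + real k * (\<epsilon>m + 2 * \<epsilon>\<pi>)" for t
  define S where "S = \<gamma> ^ (k + 1) * \<epsilon>\<pi> / (1 - \<gamma>)\<^sup>2 + real k / (1 - \<gamma>) * (\<epsilon>m + 2 * \<epsilon>\<pi>)"
  have "(\<lambda>t. \<epsilon>\<pi> * (\<gamma> ^ t * real (t - k)) + real k * (\<epsilon>m + 2 * \<epsilon>\<pi>) * \<gamma> ^ t)
          sums (\<epsilon>\<pi> * (\<gamma> ^ Suc k / (1 - \<gamma>)\<^sup>2) + real k * (\<epsilon>m + 2 * \<epsilon>\<pi>) * (1 / (1 - \<gamma>)))"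
    using assms(1,2) by (intro sums_add sums_mult sums_power_mult_diff geometric_sums) auto
  then have "(\<lambda>t. \<gamma> ^ t * \<delta> t) sums S"
    unfolding \<delta>_def S_def by (simp add: algebra_simps)
  then have "branched_ret \<rho>0 \<gamma> r k \<pi>D p \<pi> phat - ret \<rho>0 \<gamma> r \<pi> p \<le> 2 * rmax * S"
    unfolding branched_ret_def ret_def
  proof (rule suminf_discounted_expectation_diff_le[rotated -1])
    show "tv_dist (sa_dist \<pi> (branch_state_dist \<rho>0 k \<pi>D p \<pi> phat t)) (sa_dist \<pi> (state_dist \<rho>0 \<pi> p t)) \<le> \<delta> t"
      for t
      using order.trans[OF tv_dist_sa_dist_le tv_dist_state_dist_branch_state_dist_le[OF assms(4,5)]]
      by (simp add: \<delta>_def tv_dist_commute)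
  qed (use assms(1-3) in auto)
  moreover have "0 \<le> 2 * rmax * ((\<gamma> ^ k + 2) * \<epsilon>\<pi> / (1 - \<gamma>))"
    using rmax \<epsilon>\<pi> assms(1,2) by simp
  ultimately show ?thesis
    unfolding S_def by (simp add: algebra_simps)
qed

end
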